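(* For every $\varepsilon>0$ there exists a constant $N_\varepsilon>0$ such that the following holds. Let $d_{n,m}$ be the weighted number of meanders ending at $(n,m)$, and let $\tilde d_{n,m}$ be the weighted number of those meanders ending at $(n,m)$ that pass through no point $(2x,2y)$ (with $x,y$ integers) satisfying $x>N_\varepsilon$ and $y>x^{3/4}$. Then $d_{2n,0}\le(1+\varepsilon)\,\tilde d_{2n,0}$ for all $n>0$.
   Context: A meander is a lattice path from $(0,0)$ with steps $U=(1,1)$ and $D=(1,-1)$ never going below $y=0$. An up step starting at $(a,b)$ has weight $(a-b+2)/(a+b+2)$, the weight of a meander is the product of its up-step weights, and a weighted number of meanders is the sum of their weights. *)

theory Defs
  imports Complex_Main
begin

text \<open>A path of length n is a list of steps; True = U = (1,1), False = D = (1,-1).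
  After k steps the path is at the point (k, height xs k).\<close>

definition height :: "bool list \<Rightarrow> nat \<Rightarrow> int" where
  "height xs k = (\<Sum>s\<leftarrow>take k xs. if s then 1 else -1)"

definition meander :: "bool list \<Rightarrow> bool" where
  "meander xs \<longleftrightarrow> (\<forall>k\<le>length xs. height xs k \<ge> 0)"

definition mweight :: "bool list \<Rightarrow> real" where
  "mweight xs = (\<Prod>k<length xs. if xs ! k
      then (real k - real_of_int (height xs k) + 2) / (real k + real_of_int (height xs k) + 2)
      else 1)"

definition meanders_to :: "nat \<Rightarrow> int \<Rightarrow> bool list set" where
  "meanders_to n m = {xs. length xs = n \<and> meander xs \<and> height xs n = m}"

definition dnum :: "nat \<Rightarrow> int \<Rightarrow> real" where
  "dnum n m = (\<Sum>xs\<in>meanders_to n m. mweight xs)"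

definition passes_through :: "bool list \<Rightarrow> int \<Rightarrow> int \<Rightarrow> bool" where
  "passes_through xs p q \<longleftrightarrow> (\<exists>k\<le>length xs. int k = p \<and> height xs k = q)"

definition hits_bad :: "real \<Rightarrow> bool list \<Rightarrow> bool" where
  "hits_bad N xs \<longleftrightarrow> (\<exists>x y::int. real_of_int x > N \<and> real_of_int y > real_of_int x powr (3/4)
      \<and> passes_through xs (2*x) (2*y))"

definition dtilde :: "real \<Rightarrow> nat \<Rightarrow> int \<Rightarrow> real" where
  "dtilde N n m = (\<Sum>xs\<in>{xs\<in>meanders_to n m. \<not> hits_bad N xs}. mweight xs)"

end

(*
  Fix a meander through a bad point (t, 2y), t = 2x, y > x^(3/4), and let s < t < T be its last
  visit of level y before t and its first visit of level y after t. On [s, T] replace X = H - y by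
  X - 2 min X, the minimum being taken over [k, t] for k <= t and over [t, k] for k >= t (a
  Pitman-type transform). The new path descends from y to 0 at time t and climbs back to y, it is
  again a meander, and it determines the old one. Comparing weights step by step, the transform
  multiplies the weight by at least ((x+1+y)/(x+1))^y ((T+2)/(2x+y+2))^2, and y > x^(3/4) makes the
  first factor at least x^5 / 40^10. So the bad meanders with given (x, y, s, T) weigh at most
  25 * 40^10 / (x^3 (T+2)^2) times d_{2n,0}, and summing over s < 2x < T, y <= x and x > N leaves
  at most 25 * 40^10 / N times d_{2n,0}.
*)

theory Submission
  imports Defs
begin

section \<open>Heights and weights of lattice paths\<close>

lemma height_0 [simp]: "height xs 0 = 0"
  by (simp add: height_def)

lemma height_Suc:
  "k < length xs \<Longrightarrow> height xs (Suc k) = height xs k + (if xs ! k then 1 else -1)"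
  by (simp add: height_def take_Suc_conv_app_nth)

lemma height_le_index: "height xs k \<le> int k"
proof -
  have "(\<Sum>s\<leftarrow>take k xs. if s then 1 else -1 :: int) \<le> (\<Sum>s\<leftarrow>take k xs. 1)"
    by (rule sum_list_mono) simp
  then show ?thesis
    by (simp add: height_def sum_list_triv)
qed

lemma list_eq_if_heights_eq:
  assumes "length xs = length ys" and "\<And>k. k \<le> length xs \<Longrightarrow> height xs k = height ys k"
  shows "xs = ys"
proof (rule nth_equalityI)
  fix k assume "k < length xs"
  then have "height xs (Suc k) - height xs k = height ys (Suc k) - height ys k"
    using assms by simp
  then show "xs ! k = ys ! k"
    using \<open>k < length xs\<close> assms(1) by (auto simp: height_Suc split: if_splits)
qed (rule assms(1))

lemma finite_meanders_to: "finite (meanders_to n m)"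
proof (rule finite_subset)
  show "meanders_to n m \<subseteq> {xs. set xs \<subseteq> UNIV \<and> length xs = n}"
    unfolding meanders_to_def by auto
  show "finite {xs :: bool list. set xs \<subseteq> UNIV \<and> length xs = n}"
    by (rule finite_lists_length_eq) simp
qed

definition up_weight :: "nat \<Rightarrow> int \<Rightarrow> real" where
  "up_weight a b = (real a - real_of_int b + 2) / (real a + real_of_int b + 2)"

definition step_weight :: "(nat \<Rightarrow> int) \<Rightarrow> nat \<Rightarrow> real" where
  "step_weight H k = (if H k < H (Suc k) then up_weight k (H k) else 1)"

lemma mweight_eq_prod_step_weight: "mweight xs = (\<Prod>k<length xs. step_weight (height xs) k)"
  unfolding mweight_def step_weight_def up_weight_def
  by (rule prod.cong) (auto simp: height_Suc)

lemma up_weight_pos: "0 \<le> b \<Longrightarrow> b \<le> int a + 1 \<Longrightarrow> 0 < up_weight a b"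
  unfolding up_weight_def by (intro divide_pos_pos) linarith+

lemma up_weight_mono:
  assumes "0 \<le> b" and "b \<le> int a + 1" and "a \<le> a'"
  shows "up_weight a b \<le> up_weight a' b"
proof -
  have "(real a - b + 2) * (real a' + b + 2) \<le> (real a' - b + 2) * (real a + b + 2)"
    using assms by (simp add: algebra_simps mult_left_mono)
  then show ?thesis
    using assms unfolding up_weight_def by (simp add: divide_simps)
qed

lemma up_weight_antimono:
  assumes "0 \<le> b'" and "b' \<le> b" and "b \<le> int a + 1"
  shows "up_weight a b \<le> up_weight a b'"
proof -
  have "real_of_int b' * (2 * real a + 4) \<le> real_of_int b * (2 * real a + 4)"
    using assms by (intro mult_right_mono) auto
  then have "(real a - b + 2) * (real a + b' + 2) \<le> (real a - b' + 2) * (real a + b + 2)"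
    by (simp add: algebra_simps)
  then show ?thesis
    using assms unfolding up_weight_def by (simp add: divide_simps)
qed

lemma up_weight_minus_two_ge:
  assumes "2 \<le> b" and "b \<le> int a" and "real a + 3 \<le> z"
  shows "up_weight a b * (z + 2)^2 \<le> up_weight a (b - 2) * z^2"
proof -
  define u where "u = real a - real_of_int b + 2"
  define v where "v = real a + real_of_int b"
  have uv: "u \<ge> 2" "v \<ge> 2" "u + v = 2 * real a + 2"
    using assms unfolding u_def v_def by linarith+
  have w: "up_weight a b = u / (v + 2)" "up_weight a (b - 2) = (u + 2) / v"
    unfolding up_weight_def u_def v_def by (simp_all add: algebra_simps)
  have "4 * u * v \<le> (u + v)^2"
    using sum_squares_ge_zero[of "u - v" 0] by (simp add: power2_eq_square algebra_simps)
  moreover have "(u + 2) * (v + 2) * (u + v) - (u + v + 8) * u * v = 2 * (u + v)^2 + 4 * (u + v) - 8 * u * v"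
    by (simp add: power2_eq_square algebra_simps)
  moreover have "0 \<le> 4 * (u + v)"
    using uv by simp
  ultimately have "(u + v + 8) * u * v \<le> (u + 2) * (v + 2) * (u + v)"
    by linarith
  then have ratio: "u / (v + 2) * ((u + v + 8) / (u + v)) \<le> (u + 2) / v"
    using uv by (simp add: divide_simps) (simp add: algebra_simps)
  have square: "(z + 2)^2 \<le> (u + v + 8) / (u + v) * z^2"
  proof -
    have "(z + 1) * (real a + 1) \<le> (z + 1) * (z - 2)"
      using assms(3) by (intro mult_left_mono) auto
    then have "(z + 2)^2 * (real a + 1) \<le> (real a + 5) * z^2"
      using assms(3) by (simp add: power2_eq_square algebra_simps)
    then show ?thesis
      using uv by (simp add: field_simps)
  qed
  have "u / (v + 2) * (z + 2)^2 \<le> u / (v + 2) * ((u + v + 8) / (u + v) * z^2)"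
    using square uv by (intro mult_left_mono) auto
  also have "\<dots> = (u / (v + 2) * ((u + v + 8) / (u + v))) * z^2"
    by (simp only: mult.assoc)
  also have "\<dots> \<le> (u + 2) / v * z^2"
    using ratio by (rule mult_right_mono) simp
  finally show ?thesis
    unfolding w .
qed

lemma up_weight_shift_le:
  assumes "0 \<le> c" and "c < y" and "2 * y \<le> int t"
  shows "up_weight t (c + y) \<le> (real t + 2) / (real t + 2 + 2 * real_of_int y) * up_weight t c"
proof -
  define Z where "Z = real t + 2"
  define Y where "Y = real_of_int y"
  define C where "C = real_of_int c"
  have h: "0 \<le> C" "C < Y" "2 * Y \<le> Z - 2"
    using assms unfolding Z_def Y_def C_def by linarith+
  have "(Z - Y - C) * ((Z + 2 * Y) * (Z + C)) + 2*Y*Y*Z + 2*Y*Y*C + 2*Y*C*C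
      = Z * (Z - C) * (Z + Y + C)"
    by (simp add: algebra_simps)
  moreover have "0 \<le> 2*Y*Y*Z + 2*Y*Y*C + 2*Y*C*C"
    using h by simp
  ultimately have "(Z - Y - C) * ((Z + 2 * Y) * (Z + C)) \<le> Z * (Z - C) * (Z + Y + C)"
    by linarith
  moreover have "0 < Z + Y + C" "0 < Z + 2 * Y" "0 < Z + C"
    using h by linarith+
  ultimately have "(Z - Y - C) / (Z + Y + C) \<le> Z / (Z + 2 * Y) * ((Z - C) / (Z + C))"
    by (simp add: divide_simps)
  then show ?thesis
    unfolding up_weight_def Z_def Y_def C_def by (simp add: algebra_simps)
qed

lemma prod_up_weight_shift_le:
  assumes "2 * int y \<le> int t"
  shows "(\<Prod>b\<in>{int y..<2 * int y}. up_weight t b)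
    \<le> ((real t + 2) / (real t + 2 + 2 * real y))^y * (\<Prod>c\<in>{0..<int y}. up_weight t c)"
proof -
  define q where "q = (real t + 2) / (real t + 2 + 2 * real y)"
  have shift: "{int y..<2 * int y} = (\<lambda>c. c + int y) ` {0..<int y}"
    by (auto simp: image_iff intro!: exI[where x="_ - int y"])
  have "(\<Prod>b\<in>{int y..<2 * int y}. up_weight t b) = (\<Prod>c\<in>{0..<int y}. up_weight t (c + int y))"
    unfolding shift by (subst prod.reindex) (auto simp: inj_on_def)
  also have "\<dots> \<le> (\<Prod>c\<in>{0..<int y}. q * up_weight t c)"
    using assms up_weight_shift_le[of _ "int y" t] unfolding q_def
    by (intro prod_mono) (auto intro!: less_imp_le[OF up_weight_pos])
  also have "\<dots> = q ^ y * (\<Prod>c\<in>{0..<int y}. up_weight t c)"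
    by (simp add: prod.distrib)
  finally show ?thesis
    unfolding q_def .
qed

definition steps_of :: "(nat \<Rightarrow> int) \<Rightarrow> nat \<Rightarrow> bool list" where
  "steps_of H L = map (\<lambda>k. H k < H (Suc k)) [0..<L]"

locale meander_heights =
  fixes H :: "nat \<Rightarrow> int" and L :: nat
  assumes unit_step: "\<And>k. k < L \<Longrightarrow> H (Suc k) = H k + 1 \<or> H (Suc k) = H k - 1"
    and start: "H 0 = 0"
    and nonneg: "\<And>k. k \<le> L \<Longrightarrow> 0 \<le> H k"
begin

lemma le_index: "k \<le> L \<Longrightarrow> H k \<le> int k"
proof (induction k)
  case (Suc k)
  then show ?case
    using unit_step[of k] by auto
qed (simp add: start)

lemma step_weight_pos: "k < L \<Longrightarrow> 0 < step_weight H k"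
  unfolding step_weight_def using nonneg[of k] le_index[of k] by (auto intro!: up_weight_pos)

lemma prod_step_weight_nonneg: "0 \<le> (\<Prod>k\<in>A. step_weight H k)" if "A \<subseteq> {..<L}"
  using that step_weight_pos by (intro prod_nonneg) (auto intro: less_imp_le)

lemma height_steps_of: "k \<le> L \<Longrightarrow> height (steps_of H L) k = H k"
proof (induction k)
  case (Suc k)
  then show ?case
    using unit_step[of k] start by (auto simp: height_Suc steps_of_def)
qed (simp add: start)

lemma steps_of_mem_meanders_to: "steps_of H L \<in> meanders_to L (H L)"
  using height_steps_of nonneg by (simp add: meanders_to_def meander_def steps_of_def)

end

lemma meander_heights_height: "meander xs \<Longrightarrow> meander_heights (height xs) (length xs)"
  by unfold_locales (auto simp: meander_def height_Suc)

lemma mweight_nonneg: "meander xs \<Longrightarrow> 0 \<le> mweight xs"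
  unfolding mweight_eq_prod_step_weight
  by (rule meander_heights.prod_step_weight_nonneg[OF meander_heights_height]) auto

lemma dnum_nonneg: "0 \<le> dnum n m"
  unfolding dnum_def meanders_to_def by (intro sum_nonneg mweight_nonneg) auto

section \<open>Range minima and visits of a level\<close>

definition range_min :: "(nat \<Rightarrow> int) \<Rightarrow> nat \<Rightarrow> nat \<Rightarrow> int" where
  "range_min H i j = Min (H ` {i..j})"

lemma range_min_le: "i \<le> k \<Longrightarrow> k \<le> j \<Longrightarrow> range_min H i j \<le> H k"
  unfolding range_min_def by (rule Min_le) auto

lemma range_min_greatest:
  "i \<le> j \<Longrightarrow> (\<And>k. i \<le> k \<Longrightarrow> k \<le> j \<Longrightarrow> c \<le> H k) \<Longrightarrow> c \<le> range_min H i j"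
  unfolding range_min_def by (subst Min_ge_iff) auto

lemma range_min_refl [simp]: "range_min H i i = H i"
  by (simp add: range_min_def)

lemma range_min_Suc_left: "i < j \<Longrightarrow> range_min H i j = min (H i) (range_min H (Suc i) j)"
  unfolding range_min_def by (simp add: atLeastAtMost_insertL[symmetric])

lemma range_min_Suc_right: "i \<le> j \<Longrightarrow> range_min H i (Suc j) = min (range_min H i j) (H (Suc j))"
  unfolding range_min_def by (simp add: atLeastAtMostSuc_conv min.commute)

lemma range_min_subinterval:
  "i \<le> i' \<Longrightarrow> i' \<le> j' \<Longrightarrow> j' \<le> j \<Longrightarrow> range_min H i j \<le> range_min H i' j'"
  by (rule range_min_greatest) (auto intro: range_min_le)

lemma last_visit:
  fixes H :: "nat \<Rightarrow> int"
  assumes "a \<le> b" and "\<And>k. a \<le> k \<Longrightarrow> k < b \<Longrightarrow> \<bar>H (Suc k) - H k\<bar> \<le> 1"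
    and "H a \<le> v" and "v \<le> H b"
  obtains i where "a \<le> i" "i \<le> b" "H i = v" "\<And>j. i < j \<Longrightarrow> j \<le> b \<Longrightarrow> v < H j"
proof -
  define S where "S = {j \<in> {a..b}. H j \<le> v}"
  define i where "i = Max S"
  have "a \<in> S" "finite S"
    using assms(1,3) unfolding S_def by auto
  then have "i \<in> S"
    unfolding i_def by (intro Max_in) auto
  then have i: "a \<le> i" "i \<le> b" "H i \<le> v"
    unfolding S_def by auto
  have above: "v < H j" if "i < j" "j \<le> b" for j
  proof (rule ccontr)
    assume "\<not> v < H j"
    then have "j \<in> S"
      using that i(1) unfolding S_def by auto
    then show False
      using that Max_ge[OF \<open>finite S\<close>] unfolding i_def by fastforce
  qed
  have "H i = v"
  proof (cases "i = b")
    case False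
    then show ?thesis
      using i above[of "Suc i"] assms(2)[of i] by auto
  qed (use i assms(4) in simp)
  then show thesis
    using that i(1,2) above by blast
qed

lemma first_visit:
  fixes H :: "nat \<Rightarrow> int"
  assumes "a \<le> b" and "\<And>k. a \<le> k \<Longrightarrow> k < b \<Longrightarrow> \<bar>H (Suc k) - H k\<bar> \<le> 1"
    and "H b \<le> v" and "v \<le> H a"
  obtains i where "a \<le> i" "i \<le> b" "H i = v" "\<And>j. a \<le> j \<Longrightarrow> j < i \<Longrightarrow> v < H j"
proof -
  define S where "S = {j \<in> {a..b}. H j \<le> v}"
  define i where "i = Min S"
  have "b \<in> S" "finite S"
    using assms(1,3) unfolding S_def by auto
  then have "i \<in> S"
    unfolding i_def by (intro Min_in) auto
  then have i: "a \<le> i" "i \<le> b" "H i \<le> v"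
    unfolding S_def by auto
  have above: "v < H j" if "a \<le> j" "j < i" for j
  proof (rule ccontr)
    assume "\<not> v < H j"
    then have "j \<in> S"
      using that i(2) unfolding S_def by auto
    then show False
      using that Min_le[OF \<open>finite S\<close>] unfolding i_def by fastforce
  qed
  have "H i = v"
  proof (cases "i = a")
    case False
    then obtain j where "i = Suc j" "a \<le> j"
      using i(1) by (cases i) auto
    then show ?thesis
      using i above[of j] assms(2)[of j] by auto
  qed (use i assms(4) in simp)
  then show thesis
    using that i(1,2) above by blast
qed

lemma Min_reflect_suffix_min:
  fixes H :: "nat \<Rightarrow> int"
  assumes "a \<le> k" and "k \<le> b" and "\<And>i. a \<le> i \<Longrightarrow> i < k \<Longrightarrow> \<bar>H (Suc i) - H i\<bar> \<le> 1"
    and "H a \<le> range_min H k b"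
  shows "Min ((\<lambda>i. H i - 2 * range_min H i b) ` {a..k}) = - range_min H k b"
proof (rule Min_eqI)
  define v where "v = range_min H k b"
  show "- v \<le> m" if m: "m \<in> (\<lambda>i. H i - 2 * range_min H i b) ` {a..k}" for m
  proof -
    obtain i where "i \<le> k" "m = H i - 2 * range_min H i b"
      using m by auto
    moreover have "range_min H i b \<le> H i" "range_min H i b \<le> v"
      using \<open>i \<le> k\<close> assms(2) unfolding v_def by (auto intro: range_min_le range_min_subinterval)
    ultimately show ?thesis
      by linarith
  qed
  obtain i where i: "a \<le> i" "i \<le> k" "H i = v" and above: "\<And>j. i < j \<Longrightarrow> j \<le> k \<Longrightarrow> v < H j"
    using last_visit[of a k H v] assms range_min_le[of k k b H] unfolding v_def by auto
  have "v \<le> H j" if "i \<le> j" "j \<le> b" for j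
  proof (cases "k \<le> j")
    case True
    then show ?thesis
      using that unfolding v_def by (auto intro: range_min_le)
  next
    case False
    then show ?thesis
      using that i(3) above[of j] by (cases "i = j") auto
  qed
  then have "range_min H i b = v"
    using i assms(2) range_min_le[of i i b H] by (intro antisym range_min_greatest) auto
  then show "- v \<in> (\<lambda>i. H i - 2 * range_min H i b) ` {a..k}"
    using i by (auto intro!: image_eqI[of _ _ i])
qed simp

lemma Min_reflect_prefix_min:
  fixes H :: "nat \<Rightarrow> int"
  assumes "a \<le> k" and "k \<le> b" and "\<And>i. k \<le> i \<Longrightarrow> i < b \<Longrightarrow> \<bar>H (Suc i) - H i\<bar> \<le> 1"
    and "H b \<le> range_min H a k"
  shows "Min ((\<lambda>i. H i - 2 * range_min H a i) ` {k..b}) = - range_min H a k"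
proof (rule Min_eqI)
  define v where "v = range_min H a k"
  show "- v \<le> m" if m: "m \<in> (\<lambda>i. H i - 2 * range_min H a i) ` {k..b}" for m
  proof -
    obtain i where "k \<le> i" "m = H i - 2 * range_min H a i"
      using m by auto
    moreover have "range_min H a i \<le> H i" "range_min H a i \<le> v"
      using \<open>k \<le> i\<close> assms(1) unfolding v_def by (auto intro: range_min_le range_min_subinterval)
    ultimately show ?thesis
      by linarith
  qed
  obtain i where i: "k \<le> i" "i \<le> b" "H i = v" and above: "\<And>j. k \<le> j \<Longrightarrow> j < i \<Longrightarrow> v < H j"
    using first_visit[of k b H v] assms range_min_le[of a k k H] unfolding v_def by auto
  have "v \<le> H j" if "a \<le> j" "j \<le> i" for j
  proof (cases "j \<le> k")
    case True
    then show ?thesis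
      using that unfolding v_def by (auto intro: range_min_le)
  next
    case False
    then show ?thesis
      using that i(3) above[of j] by (cases "i = j") auto
  qed
  then have "range_min H a i = v"
    using i assms(1) range_min_le[of a i i H] by (intro antisym range_min_greatest) auto
  then show "- v \<in> (\<lambda>i. H i - 2 * range_min H a i) ` {k..b}"
    using i by (auto intro!: image_eqI[of _ _ i])
qed simp

lemma prod_le_prod_telescoping:
  fixes u v \<phi> :: "nat \<Rightarrow> 'a::linordered_semidom"
  assumes "a \<le> b"
    and "\<And>m. a \<le> m \<Longrightarrow> m < b \<Longrightarrow> 0 \<le> u m" and "\<And>m. a \<le> m \<Longrightarrow> m < b \<Longrightarrow> 0 \<le> v m"
    and "\<And>m. a \<le> m \<Longrightarrow> m < b \<Longrightarrow> u m * \<phi> (Suc m) \<le> v m * \<phi> m"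
  shows "(\<Prod>m\<in>{a..<b}. u m) * \<phi> b \<le> (\<Prod>m\<in>{a..<b}. v m) * \<phi> a"
proof -
  have "(\<Prod>m\<in>{a..<c}. u m) * \<phi> c \<le> (\<Prod>m\<in>{a..<c}. v m) * \<phi> a" if "a \<le> c" "c \<le> b" for c
    using that
  proof (induction c rule: nat_induct_at_least)
    case (Suc c)
    have "(\<Prod>m\<in>{a..<Suc c}. u m) * \<phi> (Suc c) = (\<Prod>m\<in>{a..<c}. u m) * (u c * \<phi> (Suc c))"
      using Suc by (simp add: prod.atLeastLessThan_Suc ac_simps)
    also have "\<dots> \<le> (\<Prod>m\<in>{a..<c}. u m) * (v c * \<phi> c)"
      using Suc assms(2,4) by (intro mult_left_mono prod_nonneg) auto
    also have "\<dots> = v c * ((\<Prod>m\<in>{a..<c}. u m) * \<phi> c)"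
      by (simp add: ac_simps)
    also have "\<dots> \<le> v c * ((\<Prod>m\<in>{a..<c}. v m) * \<phi> a)"
      using Suc assms(3) by (intro mult_left_mono) auto
    also have "\<dots> = (\<Prod>m\<in>{a..<Suc c}. v m) * \<phi> a"
      using Suc by (simp add: prod.atLeastLessThan_Suc ac_simps)
    finally show ?case .
  qed simp
  then show ?thesis
    using assms(1) by simp
qed

section \<open>The Pitman transform of an excursion\<close>

definition pitman :: "(nat \<Rightarrow> int) \<Rightarrow> nat \<Rightarrow> nat \<Rightarrow> nat \<Rightarrow> nat \<Rightarrow> nat \<Rightarrow> int" where
  "pitman H y s t T k =
    (if s \<le> k \<and> k \<le> t then H k - 2 * (range_min H k t - int y)
     else if t \<le> k \<and> k \<le> T then H k - 2 * (range_min H t k - int y)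
     else H k)"

definition pitman_inv :: "(nat \<Rightarrow> int) \<Rightarrow> nat \<Rightarrow> nat \<Rightarrow> nat \<Rightarrow> nat \<Rightarrow> nat \<Rightarrow> int" where
  "pitman_inv G y s t T k =
    (if s \<le> k \<and> k \<le> t then G k + 2 * (int y - Min (G ` {s..k}))
     else if t \<le> k \<and> k \<le> T then G k + 2 * (int y - Min (G ` {k..T}))
     else G k)"

locale excursion = meander_heights +
  fixes y s t T :: nat
  assumes level_pos: "1 \<le> y"
    and s_less_t: "s < t" and t_less_T: "t < T" and T_le_L: "T \<le> L"
    and at_s: "H s = int y" and at_t: "H t = 2 * int y" and at_T: "H T = int y"
    and above_level: "\<And>k. s < k \<Longrightarrow> k < T \<Longrightarrow> int y < H k"
begin

abbreviation g :: "nat \<Rightarrow> int" where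
  "g \<equiv> pitman H y s t T"

lemma abs_unit_step: "k < L \<Longrightarrow> \<bar>H (Suc k) - H k\<bar> \<le> 1"
  using unit_step[of k] by auto

lemma two_level_le_t: "2 * int y \<le> int t"
  using le_index[of t] at_t t_less_T T_le_L by simp

lemma range_min_at_s: "range_min H s t = int y"
  using s_less_t at_s above_level t_less_T range_min_le[of s s t H]
  by (intro antisym range_min_greatest) (auto simp: le_less)

lemma range_min_descent_bounds:
  assumes "s \<le> k" and "k \<le> t"
  shows "int y \<le> range_min H k t" and "range_min H k t \<le> 2 * int y"
  using assms range_min_subinterval[of s k t t H] range_min_at_s range_min_le[of k t t H] at_t
  by auto

lemma range_min_at_T: "range_min H t T = int y"
  using t_less_T at_T above_level s_less_t range_min_le[of t T T H]
  by (intro antisym range_min_greatest) (auto simp: le_less)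

lemma range_min_ascent_bounds:
  assumes "t \<le> k" and "k \<le> T"
  shows "int y \<le> range_min H t k" and "k < T \<Longrightarrow> int y < range_min H t k"
    and "range_min H t k \<le> 2 * int y"
proof -
  show "k < T \<Longrightarrow> int y < range_min H t k"
  proof -
    assume "k < T"
    then have "int y < H j" if "t \<le> j" "j \<le> k" for j
      using that s_less_t by (intro above_level) auto
    then have "int y + 1 \<le> range_min H t k"
      using assms by (intro range_min_greatest) (auto simp: add1_zle_eq)
    then show ?thesis
      by simp
  qed
  then show "int y \<le> range_min H t k"
    using assms range_min_at_T by (cases "k = T") auto
  show "range_min H t k \<le> 2 * int y"
    using assms range_min_le[of t t k H] at_t by simp
qed

lemma pitman_before: "k \<le> s \<Longrightarrow> g k = H k"
  using s_less_t range_min_at_s at_s by (auto simp: pitman_def)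

lemma pitman_descent: "s \<le> k \<Longrightarrow> k \<le> t \<Longrightarrow> g k = H k - 2 * (range_min H k t - int y)"
  by (simp add: pitman_def)

lemma pitman_ascent: "t \<le> k \<Longrightarrow> k \<le> T \<Longrightarrow> g k = H k - 2 * (range_min H t k - int y)"
  using at_t by (auto simp: pitman_def)

lemma pitman_after: "T \<le> k \<Longrightarrow> g k = H k"
  using s_less_t t_less_T range_min_at_T at_T by (auto simp: pitman_def)

lemma pitman_descent_step:
  assumes "s \<le> m" and "m < t"
  shows "range_min H (Suc m) t = range_min H m t + 1 \<and> H m = range_min H m t \<and>
      H (Suc m) = H m + 1 \<and> g (Suc m) = g m - 1
    \<or> range_min H (Suc m) t = range_min H m t \<and> g (Suc m) - g m = H (Suc m) - H m"
proof -
  have "range_min H m t = min (H m) (range_min H (Suc m) t)" "range_min H (Suc m) t \<le> H (Suc m)"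
    using assms by (auto intro: range_min_Suc_left range_min_le)
  then show ?thesis
    using assms unit_step[of m] t_less_T T_le_L by (auto simp: pitman_descent min_def)
qed

lemma pitman_ascent_step:
  assumes "t \<le> m" and "m < T"
  shows "range_min H t (Suc m) = range_min H t m - 1 \<and> H m = range_min H t m \<and>
      H (Suc m) = H m - 1 \<and> g (Suc m) = g m + 1
    \<or> range_min H t (Suc m) = range_min H t m \<and> g (Suc m) - g m = H (Suc m) - H m"
proof -
  have "range_min H t (Suc m) = min (range_min H t m) (H (Suc m))" "range_min H t m \<le> H m"
    using assms by (auto intro: range_min_Suc_right range_min_le)
  then show ?thesis
    using assms unit_step[of m] T_le_L by (auto simp: pitman_ascent min_def)
qed

lemma pitman_unit_step:
  assumes "k < L"
  shows "g (Suc k) = g k + 1 \<or> g (Suc k) = g k - 1"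
proof -
  consider "Suc k \<le> s" | "s \<le> k" "k < t" | "t \<le> k" "k < T" | "T \<le> k"
    using s_less_t t_less_T by linarith
  then show ?thesis
  proof cases
    case 2
    then show ?thesis
      using pitman_descent_step[of k] unit_step[OF assms] by auto
  next
    case 3
    then show ?thesis
      using pitman_ascent_step[of k] unit_step[OF assms] by auto
  qed (use unit_step[OF assms] in \<open>simp_all add: pitman_before pitman_after\<close>)
qed

lemma pitman_bounds:
  assumes "k \<le> L"
  shows "0 \<le> g k" and "g k \<le> H k"
proof -
  consider "k \<le> s" | "s \<le> k" "k \<le> t" | "t \<le> k" "k \<le> T" | "T \<le> k"
    using s_less_t t_less_T by linarith
  then have "0 \<le> g k \<and> g k \<le> H k"
  proof cases
    case 2
    then show ?thesis
      using range_min_descent_bounds[of k] range_min_le[of k k t H] by (simp add: pitman_descent)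
  next
    case 3
    then show ?thesis
      using range_min_ascent_bounds[of k] range_min_le[of t k k H] by (simp add: pitman_ascent)
  qed (use nonneg[OF assms] in \<open>simp_all add: pitman_before pitman_after\<close>)
  then show "0 \<le> g k" and "g k \<le> H k"
    by simp_all
qed

sublocale pitman: meander_heights g L
  using pitman_unit_step pitman_bounds(1) pitman_before[of 0] start by unfold_locales simp_all

lemma pitman_inv_pitman: "pitman_inv g y s t T k = H k"
proof -
  consider "k < s" | "s \<le> k" "k \<le> t" | "t < k" "k \<le> T" | "T < k"
    using s_less_t t_less_T by linarith
  then show ?thesis
  proof cases
    case 2
    have "g ` {s..k} = (\<lambda>i. (H i - 2 * range_min H i t) + 2 * int y) ` {s..k}"
      using 2 by (intro image_cong) (auto simp: pitman_descent)
    moreover have "Min ((\<lambda>i. H i - 2 * range_min H i t) ` {s..k}) = - range_min H k t"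
      using 2 abs_unit_step T_le_L t_less_T at_s range_min_descent_bounds(1)[of k]
      by (intro Min_reflect_suffix_min) auto
    ultimately show ?thesis
      using 2 by (simp add: pitman_inv_def pitman_descent Min_add_commute)
  next
    case 3
    have "g ` {k..T} = (\<lambda>i. (H i - 2 * range_min H t i) + 2 * int y) ` {k..T}"
      using 3 by (intro image_cong) (auto simp: pitman_ascent)
    moreover have "Min ((\<lambda>i. H i - 2 * range_min H t i) ` {k..T}) = - range_min H t k"
      using 3 abs_unit_step T_le_L at_T range_min_ascent_bounds(1)[of k]
      by (intro Min_reflect_prefix_min) auto
    ultimately show ?thesis
      using 3 s_less_t by (simp add: pitman_inv_def pitman_ascent Min_add_commute)
  qed (use s_less_t t_less_T in \<open>auto simp: pitman_inv_def pitman_before pitman_after\<close>)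
qed

(*
  Potentials for a telescoping comparison of step weights. Before t, a step at which the future
  minimum of H rises from b to b + 1 is an up step of H at height b but a down step of the
  transform, so the transform gains at least the factor 1 / up_weight t b. After t, a step at
  which the running minimum of H falls to b - 1 is a down step of H but an up step of the
  transform at height 2y - b, which costs at most the factor up_weight t (2y - b); every other up
  step of H is an up step of the transform at least two units lower, which gains the factor
  ((z + 2) / z)^2, z = H m + m - y + 2, and these factors telescope to ((T + 2) / (t + y + 2))^2.
*)

definition descent_potential :: "nat \<Rightarrow> real" where
  "descent_potential m = (\<Prod>b\<in>{range_min H m t..<2 * int y}. up_weight t b)"

definition ascent_potential :: "nat \<Rightarrow> real" where
  "ascent_potential m = (\<Prod>c\<in>{0..<2 * int y - range_min H t m}. up_weight t c)
     * (real_of_int (H m) + real m - real y + 2)^2"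

lemma up_weight_below_t_pos: "0 \<le> b \<Longrightarrow> b \<le> 2 * int y \<Longrightarrow> 0 < up_weight t b"
  using two_level_le_t by (intro up_weight_pos) auto

lemma step_weight_le_if_same_step:
  assumes "m < L" and "g (Suc m) - g m = H (Suc m) - H m"
  shows "step_weight H m \<le> step_weight g m"
  using assms pitman_bounds[of m] nonneg[of m] le_index[of m]
  by (auto simp: step_weight_def intro: up_weight_antimono)

lemma step_weight_descent:
  assumes "s \<le> m" and "m < t"
  shows "step_weight H m * descent_potential (Suc m) \<le> step_weight g m * descent_potential m"
proof -
  have "m < L"
    using assms t_less_T T_le_L by simp
  have potential_nonneg: "0 \<le> descent_potential (Suc m)"
    unfolding descent_potential_def using range_min_descent_bounds[of "Suc m"] assms
    by (intro prod_nonneg) (auto intro!: less_imp_le[OF up_weight_below_t_pos])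
  from pitman_descent_step[OF assms] show ?thesis
  proof
    assume rise: "range_min H (Suc m) t = range_min H m t + 1 \<and> H m = range_min H m t \<and>
      H (Suc m) = H m + 1 \<and> g (Suc m) = g m - 1"
    then have "{H m..<2 * int y} = insert (H m) {H m + 1..<2 * int y}"
      using assms range_min_descent_bounds[of "Suc m"] by auto
    then have "descent_potential m = up_weight t (H m) * descent_potential (Suc m)"
      using rise unfolding descent_potential_def by simp
    moreover have "step_weight H m = up_weight m (H m)" "step_weight g m = 1"
      using rise by (simp_all add: step_weight_def)
    moreover have "up_weight m (H m) \<le> up_weight t (H m)"
      using assms \<open>m < L\<close> nonneg[of m] le_index[of m] by (intro up_weight_mono) auto
    ultimately show ?thesis
      using potential_nonneg by (simp add: mult_right_mono)
  next
    assume "range_min H (Suc m) t = range_min H m t \<and> g (Suc m) - g m = H (Suc m) - H m"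
    then show ?thesis
      using step_weight_le_if_same_step[OF \<open>m < L\<close>] potential_nonneg
      by (simp add: descent_potential_def mult_right_mono)
  qed
qed

lemma up_weight_pitman_ascent:
  assumes "t \<le> m" and "m < T"
  defines "z \<equiv> real_of_int (H m) + real m - real y + 2"
  shows "up_weight m (H m) * (z + 2)^2 \<le> up_weight m (g m) * z^2"
proof -
  have "int y < range_min H t m" "range_min H t m \<le> H m" "m < L"
    using assms(1,2) range_min_ascent_bounds[of m] range_min_le[of t m m H] T_le_L by auto
  then have "up_weight m (H m) * (z + 2)^2 \<le> up_weight m (H m - 2) * z^2"
    using level_pos le_index[of m] unfolding z_def by (intro up_weight_minus_two_ge) auto
  also have "\<dots> \<le> up_weight m (g m) * z^2"
    using assms(1,2) \<open>int y < range_min H t m\<close> \<open>m < L\<close> pitman_bounds(1)[of m] le_index[of m]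
    by (intro mult_right_mono up_weight_antimono) (auto simp: pitman_ascent)
  finally show ?thesis .
qed

lemma step_weight_ascent:
  assumes "t \<le> m" and "m < T"
  shows "step_weight H m * ascent_potential (Suc m) \<le> step_weight g m * ascent_potential m"
proof -
  define r where "r = range_min H t m"
  define P where "P = (\<Prod>c\<in>{0..<2 * int y - r}. up_weight t c)"
  define z where "z = real_of_int (H m) + real m - real y + 2"
  have r: "int y < r" "r \<le> 2 * int y"
    using assms range_min_ascent_bounds[of m] unfolding r_def by auto
  have P_nonneg: "0 \<le> P"
    unfolding P_def using r by (intro prod_nonneg) (auto intro!: less_imp_le[OF up_weight_below_t_pos])
  have potential: "ascent_potential m = P * z^2"
    unfolding ascent_potential_def P_def z_def r_def ..
  consider (new_min) "range_min H t (Suc m) = r - 1" "H m = r" "H (Suc m) = H m - 1" "g (Suc m) = g m + 1"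
    | (up) "range_min H t (Suc m) = r" "g (Suc m) = g m + 1" "H (Suc m) = H m + 1"
    | (down) "range_min H t (Suc m) = r" "g (Suc m) = g m - 1" "H (Suc m) = H m - 1"
    using pitman_ascent_step[OF assms] unit_step[of m] assms T_le_L unfolding r_def by fastforce
  then show ?thesis
  proof cases
    case new_min
    have "{0..<2 * int y - (r - 1)} = insert (2 * int y - r) {0..<2 * int y - r}"
      using r by auto
    then have "ascent_potential (Suc m) = up_weight t (2 * int y - r) * (P * z^2)"
      using new_min unfolding ascent_potential_def P_def z_def by simp
    moreover have "g m = 2 * int y - r"
      using new_min assms by (simp add: pitman_ascent r_def)
    moreover have "up_weight t (2 * int y - r) \<le> up_weight m (2 * int y - r)"
      using assms r two_level_le_t by (intro up_weight_mono) auto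
    ultimately show ?thesis
      using new_min P_nonneg potential by (simp add: step_weight_def mult_right_mono)
  next
    case up
    then have "ascent_potential (Suc m) = P * (z + 2)^2"
      unfolding ascent_potential_def P_def z_def by (simp add: algebra_simps)
    then show ?thesis
      using up P_nonneg potential up_weight_pitman_ascent[OF assms] unfolding z_def
      by (simp add: step_weight_def mult_left_mono mult.left_commute)
  next
    case down
    then have z_eq: "real_of_int (H (Suc m)) + real (Suc m) - real y + 2 = real_of_int (H m) + real m - real y + 2"
      by simp
    have "ascent_potential (Suc m) = ascent_potential m"
      using down(1) unfolding r_def by (simp only: ascent_potential_def z_eq)
    then show ?thesis
      using down by (simp add: step_weight_def)
  qed
qed

lemma prod_step_weight_descent:
  "(\<Prod>k\<in>{s..<t}. step_weight H k)
    \<le> (\<Prod>k\<in>{s..<t}. step_weight g k) * (\<Prod>b\<in>{int y..<2 * int y}. up_weight t b)"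
proof -
  have "(\<Prod>k\<in>{s..<t}. step_weight H k) * descent_potential t
      \<le> (\<Prod>k\<in>{s..<t}. step_weight g k) * descent_potential s"
    using s_less_t t_less_T T_le_L
    by (intro prod_le_prod_telescoping step_weight_descent less_imp_le[OF step_weight_pos]
        less_imp_le[OF pitman.step_weight_pos]) auto
  moreover have "descent_potential t = 1"
    "descent_potential s = (\<Prod>b\<in>{int y..<2 * int y}. up_weight t b)"
    by (simp_all add: descent_potential_def at_t range_min_at_s)
  ultimately show ?thesis
    by simp
qed

lemma prod_step_weight_ascent:
  "(\<Prod>k\<in>{t..<T}. step_weight H k) * ((\<Prod>c\<in>{0..<int y}. up_weight t c) * (real T + 2)^2)
    \<le> (\<Prod>k\<in>{t..<T}. step_weight g k) * (real t + real y + 2)^2"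
proof -
  have "(\<Prod>k\<in>{t..<T}. step_weight H k) * ascent_potential T
      \<le> (\<Prod>k\<in>{t..<T}. step_weight g k) * ascent_potential t"
    using t_less_T T_le_L
    by (intro prod_le_prod_telescoping step_weight_ascent less_imp_le[OF step_weight_pos]
        less_imp_le[OF pitman.step_weight_pos]) auto
  moreover have "ascent_potential T = (\<Prod>c\<in>{0..<int y}. up_weight t c) * (real T + 2)^2"
    "ascent_potential t = (real t + real y + 2)^2"
    by (simp_all add: ascent_potential_def at_t at_T range_min_at_T algebra_simps)
  ultimately show ?thesis
    by simp
qed

lemma prod_step_weight_pitman:
  "(\<Prod>k<L. step_weight H k) * (\<Prod>c\<in>{0..<int y}. up_weight t c) * (real T + 2)^2
    \<le> (\<Prod>k<L. step_weight g k) * (\<Prod>b\<in>{int y..<2 * int y}. up_weight t b) * (real t + real y + 2)^2"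
proof -
  have split: "(\<Prod>k<L. f k) = (\<Prod>k\<in>{0..<s}. f k) * (\<Prod>k\<in>{s..<t}. f k) * (\<Prod>k\<in>{t..<T}. f k) * (\<Prod>k\<in>{T..<L}. f k)"
    for f :: "nat \<Rightarrow> real"
    using s_less_t t_less_T T_le_L by (simp add: lessThan_atLeast0 prod.atLeastLessThan_concat)
  have before: "(\<Prod>k\<in>{0..<s}. step_weight H k) = (\<Prod>k\<in>{0..<s}. step_weight g k)"
    by (intro prod.cong) (auto simp: step_weight_def pitman_before)
  have after: "(\<Prod>k\<in>{T..<L}. step_weight H k) = (\<Prod>k\<in>{T..<L}. step_weight g k)"
    by (intro prod.cong) (auto simp: step_weight_def pitman_after)
  have nonneg_factors: "0 \<le> (\<Prod>k\<in>{0..<s}. step_weight g k) * (\<Prod>k\<in>{T..<L}. step_weight g k)"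
    "0 \<le> (\<Prod>k\<in>{s..<t}. step_weight g k) * (\<Prod>b\<in>{int y..<2 * int y}. up_weight t b)"
    "0 \<le> (\<Prod>k\<in>{t..<T}. step_weight H k) * ((\<Prod>c\<in>{0..<int y}. up_weight t c) * (real T + 2)^2)"
    using s_less_t t_less_T T_le_L two_level_le_t
    by (auto intro!: mult_nonneg_nonneg prod_nonneg less_imp_le[OF step_weight_pos]
        less_imp_le[OF pitman.step_weight_pos] less_imp_le[OF up_weight_below_t_pos])
  have "(\<Prod>k\<in>{0..<s}. step_weight g k) * (\<Prod>k\<in>{T..<L}. step_weight g k) *
      ((\<Prod>k\<in>{s..<t}. step_weight H k) * ((\<Prod>k\<in>{t..<T}. step_weight H k) *
        ((\<Prod>c\<in>{0..<int y}. up_weight t c) * (real T + 2)^2)))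
    \<le> (\<Prod>k\<in>{0..<s}. step_weight g k) * (\<Prod>k\<in>{T..<L}. step_weight g k) *
      (((\<Prod>k\<in>{s..<t}. step_weight g k) * (\<Prod>b\<in>{int y..<2 * int y}. up_weight t b)) *
        ((\<Prod>k\<in>{t..<T}. step_weight g k) * (real t + real y + 2)^2))"
    by (intro mult_left_mono[OF mult_mono[OF prod_step_weight_descent prod_step_weight_ascent
          nonneg_factors(2,3)] nonneg_factors(1)])
  then show ?thesis
    unfolding split[of "step_weight H"] split[of "step_weight g"] before after
    by (simp add: ac_simps)
qed

lemma prod_step_weight_pitman_ratio:
  "(\<Prod>k<L. step_weight H k) * (real T + 2)^2
    \<le> (\<Prod>k<L. step_weight g k) * ((real t + 2) / (real t + 2 + 2 * real y))^y * (real t + real y + 2)^2"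
proof -
  define lower where "lower = (\<Prod>c\<in>{0..<int y}. up_weight t c)"
  define q where "q = ((real t + 2) / (real t + 2 + 2 * real y))^y"
  have lower_pos: "0 < lower"
    unfolding lower_def by (intro prod_pos) (auto intro!: up_weight_below_t_pos)
  have "(\<Prod>k<L. step_weight H k) * (real T + 2)^2 * lower
      \<le> (\<Prod>k<L. step_weight g k) * (\<Prod>b\<in>{int y..<2 * int y}. up_weight t b) * (real t + real y + 2)^2"
    using prod_step_weight_pitman unfolding lower_def by (simp add: ac_simps)
  also have "\<dots> \<le> (\<Prod>k<L. step_weight g k) * (q * lower) * (real t + real y + 2)^2"
    using prod_up_weight_shift_le[OF two_level_le_t] pitman.prod_step_weight_nonneg[of "{..<L}"]
    unfolding q_def lower_def by (intro mult_right_mono mult_left_mono) auto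
  finally show ?thesis
    using lower_pos unfolding q_def by (simp add: ac_simps)
qed

lemma height_eq_pitman_inv:
  assumes "\<And>j. j \<le> L \<Longrightarrow> G j = g j" and "k \<le> L"
  shows "H k = pitman_inv G y s t T k"
proof -
  have "G ` {s..k} = g ` {s..k}" "G ` {k..T} = g ` {k..T}"
    using assms T_le_L by (auto intro!: image_cong)
  then have "pitman_inv G y s t T k = pitman_inv g y s t T k"
    using assms by (simp add: pitman_inv_def)
  then show ?thesis
    by (simp add: pitman_inv_pitman)
qed

end

section \<open>Excursion classes\<close>

definition excursion_class :: "nat \<Rightarrow> nat \<Rightarrow> nat \<Rightarrow> nat \<Rightarrow> nat \<Rightarrow> bool list set" where
  "excursion_class L y s t T = {P \<in> meanders_to L 0. excursion (height P) L y s t T}"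

definition pitman_path :: "nat \<Rightarrow> nat \<Rightarrow> nat \<Rightarrow> nat \<Rightarrow> nat \<Rightarrow> bool list \<Rightarrow> bool list" where
  "pitman_path L y s t T P = steps_of (pitman (height P) y s t T) L"

context
  fixes L y s t T :: nat and P :: "bool list"
  assumes P: "P \<in> excursion_class L y s t T"
begin

interpretation excursion "height P" L y s t T
  using P by (simp add: excursion_class_def)

lemma length_excursion_class: "length P = L"
  using P by (simp add: excursion_class_def meanders_to_def)

lemma height_pitman_path: "k \<le> L \<Longrightarrow> height (pitman_path L y s t T P) k = pitman (height P) y s t T k"
  unfolding pitman_path_def by (rule pitman.height_steps_of)

lemma pitman_path_mem_meanders_to: "pitman_path L y s t T P \<in> meanders_to L 0"
  using pitman.steps_of_mem_meanders_to pitman_after[OF T_le_L] P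
  by (simp add: pitman_path_def excursion_class_def meanders_to_def)

lemma mweight_pitman_path:
  "mweight P * (real T + 2)^2
    \<le> mweight (pitman_path L y s t T P) * ((real t + 2) / (real t + 2 + 2 * real y))^y * (real t + real y + 2)^2"
proof -
  have "step_weight (height (pitman_path L y s t T P)) k = step_weight g k" if "k < L" for k
    using that by (simp add: step_weight_def height_pitman_path)
  then have "mweight (pitman_path L y s t T P) = (\<Prod>k<L. step_weight g k)"
    by (simp add: mweight_eq_prod_step_weight pitman_path_def steps_of_def)
  then show ?thesis
    using prod_step_weight_pitman_ratio by (simp add: mweight_eq_prod_step_weight length_excursion_class)
qed

lemma height_eq_pitman_inv_pitman_path:
  "k \<le> L \<Longrightarrow> height P k = pitman_inv (height (pitman_path L y s t T P)) y s t T k"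
  by (rule height_eq_pitman_inv) (simp_all add: height_pitman_path)

end

lemma inj_on_pitman_path: "inj_on (pitman_path L y s t T) (excursion_class L y s t T)"
proof (rule inj_onI)
  fix P Q
  assume P: "P \<in> excursion_class L y s t T" and Q: "Q \<in> excursion_class L y s t T"
    and eq: "pitman_path L y s t T P = pitman_path L y s t T Q"
  show "P = Q"
    using height_eq_pitman_inv_pitman_path[OF P] height_eq_pitman_inv_pitman_path[OF Q] eq
      length_excursion_class[OF P] length_excursion_class[OF Q]
    by (intro list_eq_if_heights_eq) auto
qed

lemma sum_excursion_class_le:
  "(\<Sum>P\<in>excursion_class L y s t T. mweight P) * (real T + 2)^2
    \<le> ((real t + 2) / (real t + 2 + 2 * real y))^y * (real t + real y + 2)^2 * dnum L 0"
proof -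
  define c where "c = ((real t + 2) / (real t + 2 + 2 * real y))^y * (real t + real y + 2)^2"
  have c: "0 \<le> c"
    unfolding c_def by simp
  have "mweight P * (real T + 2)^2 \<le> c * mweight (pitman_path L y s t T P)"
    if "P \<in> excursion_class L y s t T" for P
    using mweight_pitman_path[OF that] unfolding c_def by (simp add: ac_simps)
  then have "(\<Sum>P\<in>excursion_class L y s t T. mweight P) * (real T + 2)^2
      \<le> (\<Sum>P\<in>excursion_class L y s t T. c * mweight (pitman_path L y s t T P))"
    unfolding sum_distrib_right by (rule sum_mono)
  also have "\<dots> = c * (\<Sum>Q\<in>pitman_path L y s t T ` excursion_class L y s t T. mweight Q)"
    by (simp add: sum_distrib_left sum.reindex[OF inj_on_pitman_path])
  also have "\<dots> \<le> c * dnum L 0"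
    unfolding dnum_def using c pitman_path_mem_meanders_to finite_meanders_to
    by (intro mult_left_mono sum_mono2) (auto intro!: mweight_nonneg simp: meanders_to_def)
  finally show ?thesis
    unfolding c_def .
qed

section \<open>The weight of the bad meanders\<close>

lemma sum_UN_le:
  fixes f :: "'a \<Rightarrow> 'b::ordered_comm_monoid_add"
  assumes "finite I" and "\<And>i. i \<in> I \<Longrightarrow> finite (A i)"
    and "\<And>x. x \<in> (\<Union>i\<in>I. A i) \<Longrightarrow> 0 \<le> f x"
  shows "sum f (\<Union>i\<in>I. A i) \<le> (\<Sum>i\<in>I. sum f (A i))"
  using assms
proof (induction I rule: finite_induct)
  case (insert i I)
  have "sum f (A i \<union> (\<Union>j\<in>I. A j)) \<le> sum f (A i \<union> (\<Union>j\<in>I. A j)) + sum f (A i \<inter> (\<Union>j\<in>I. A j))"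
    using insert.prems(2) by (intro add_increasing2 sum_nonneg) auto
  also have "\<dots> = sum f (A i) + sum f (\<Union>j\<in>I. A j)"
    using insert by (intro sum.union_inter) auto
  also have "\<dots> \<le> sum f (A i) + (\<Sum>j\<in>I. sum f (A j))"
    using insert by (intro add_left_mono insert.IH) auto
  finally show ?case
    using insert by simp
qed simp

lemma sum_inverse_square_le:
  assumes "1 \<le> a"
  shows "(\<Sum>k\<in>{a<..b}. 1 / (real k)^2) \<le> 1 / real a"
proof -
  have "(\<Sum>k\<in>{a<..b}. 1 / (real k)^2) \<le> 1 / real a - 1 / real (max a b)" for b
  proof (induction b)
    case (Suc b)
    show ?case
    proof (cases "a \<le> b")
      case True
      have b: "1 \<le> real b"
        using True assms by simp
      have "1 / (real b + 1)^2 \<le> 1 / (real b * (real b + 1))"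
        unfolding power2_eq_square using b by (intro divide_left_mono mult_right_mono mult_pos_pos) auto
      also have "\<dots> = 1 / real b - 1 / (real b + 1)"
        using b by (simp add: field_simps)
      finally have "1 / (real b + 1)^2 \<le> 1 / real b - 1 / (real b + 1)" .
      moreover have "{a<..Suc b} = insert (Suc b) {a<..b}"
        using True by auto
      ultimately show ?thesis
        using Suc True by (simp add: max_def add.commute[of "real b" 1])
    qed (simp add: not_le greaterThanAtMost_empty)
  qed simp
  then show ?thesis
    by (smt (verit) divide_nonneg_nonneg of_nat_0_le_iff)
qed

lemma exp_half_le_one_plus:
  fixes u :: real
  assumes "0 \<le> u" and "u \<le> 1"
  shows "exp (u / 2) \<le> 1 + u"
proof -
  have "1 - u / 2 \<le> exp (- (u / 2))"
    using exp_ge_add_one_self[of "- (u / 2)"] by simp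
  then have "exp (u / 2) \<le> 1 / (1 - u / 2)"
    using assms by (simp add: exp_minus divide_simps mult.commute)
  also have "\<dots> \<le> 1 + u"
    using assms by (simp add: divide_simps algebra_simps mult_left_le)
  finally show ?thesis .
qed

lemma power_divide_le_exp:
  fixes z :: real
  assumes "0 \<le> z" and "0 < n"
  shows "(z / real n)^n \<le> exp z"
proof -
  have "(z / real n)^n \<le> (1 + z / real n)^n"
    using assms by (intro power_mono) auto
  also have "\<dots> \<le> exp z"
    using assms by (intro exp_ge_one_plus_x_over_n_power_n) auto
  finally show ?thesis .
qed

lemma exp_sqrt_le_power:
  fixes x y :: nat
  assumes "1 \<le> x" and "y \<le> x" and "real x powr (3/4) < real y"
  shows "exp (sqrt (real x) / 4) \<le> (1 + real y / (real x + 1))^y"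
proof -
  define u where "u = real y / (real x + 1)"
  have u: "0 \<le> u" "u \<le> 1"
    using assms(2) unfolding u_def by (auto simp: divide_simps)
  have "real x * sqrt (real x) = (real x powr (3/4))^2"
  proof -
    have "(real x powr (3/4))^2 = real x powr (1 + 1/2)"
      using assms(1) by (simp add: powr_power)
    also have "\<dots> = real x * sqrt (real x)"
      by (simp only: powr_add) (simp add: powr_half_sqrt)
    finally show ?thesis ..
  qed
  also have "\<dots> \<le> (real y)^2"
    using assms(3) by (intro power_mono) auto
  finally have x_sqrt_x: "real x * sqrt (real x) \<le> (real y)^2" .
  have "sqrt (real x) / 4 = real x * sqrt (real x) / (4 * real x)"
    using assms(1) by simp
  also have "\<dots> \<le> (real y)^2 / (2 * (real x + 1))"
    using assms(1) x_sqrt_x by (intro frac_le) auto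
  also have "\<dots> = real y * (u / 2)"
    unfolding u_def by (simp add: power2_eq_square)
  finally have "exp (sqrt (real x) / 4) \<le> exp (u / 2) ^ y"
    by (simp add: exp_of_nat_mult[symmetric])
  also have "\<dots> \<le> (1 + u)^y"
    using exp_half_le_one_plus[OF u] by (intro power_mono) auto
  finally show ?thesis
    unfolding u_def .
qed

lemma ratio_power_le:
  fixes x y :: nat
  assumes "1 \<le> x" and "y \<le> x" and "real x powr (3/4) < real y"
  shows "((real x + 1) / (real x + 1 + real y))^y \<le> 40^10 / (real x)^5"
proof -
  have "(sqrt (real x) / 4 / real (10::nat))^10 = (real x)^5 / 40^10"
    by (simp add: power_divide power_mult[of "sqrt (real x)" 2 5, simplified])
  then have "(real x)^5 / 40^10 \<le> exp (sqrt (real x) / 4)"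
    using power_divide_le_exp[of "sqrt (real x) / 4" 10] by simp
  also have "\<dots> \<le> (1 + real y / (real x + 1))^y"
    by (rule exp_sqrt_le_power[OF assms])
  finally have lower: "(real x)^5 / 40^10 \<le> (1 + real y / (real x + 1))^y" .
  have "((real x + 1) / (real x + 1 + real y))^y = 1 / (1 + real y / (real x + 1))^y"
    by (simp add: field_simps power_divide)
  also have "\<dots> \<le> 1 / ((real x)^5 / 40^10)"
    using lower assms(1) by (intro divide_left_mono mult_pos_pos zero_less_power) (auto intro: add_pos_nonneg)
  finally show ?thesis
    by simp
qed

lemma mem_excursion_class_if_height:
  assumes P: "P \<in> meanders_to L 0" and "1 \<le> y" and "t \<le> L" and at_t: "height P t = 2 * int y"
  obtains s T where "s < t" "t < T" "T \<le> L" "P \<in> excursion_class L y s t T"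
proof -
  have "meander P" and len: "length P = L" and end_0: "height P L = 0"
    using P unfolding meanders_to_def by auto
  interpret meander_heights "height P" L
    using meander_heights_height[OF \<open>meander P\<close>] len by simp
  have steps: "\<bar>height P (Suc k) - height P k\<bar> \<le> 1" if "k < L" for k
    using unit_step[OF that] by auto
  obtain s where s: "s \<le> t" "height P s = int y" and above_s: "\<And>j. s < j \<Longrightarrow> j \<le> t \<Longrightarrow> int y < height P j"
    using last_visit[of 0 t "height P" "int y"] steps assms(3) at_t by auto
  obtain T where T: "t \<le> T" "T \<le> L" "height P T = int y" and above_T: "\<And>j. t \<le> j \<Longrightarrow> j < T \<Longrightarrow> int y < height P j"
    using first_visit[of t L "height P" "int y"] steps assms(3) at_t end_0 by auto
  have "s < t" "t < T"
    using s T at_t \<open>1 \<le> y\<close> by (auto simp: le_less)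
  have "excursion (height P) L y s t T"
  proof (intro excursion.intro excursion_axioms.intro meander_heights_axioms)
    show "int y < height P j" if "s < j" "j < T" for j
      using above_s[of j] above_T[of j] that by linarith
  qed (use assms s T \<open>s < t\<close> \<open>t < T\<close> in auto)
  then show thesis
    using that \<open>s < t\<close> \<open>t < T\<close> T(2) P by (simp add: excursion_class_def)
qed

lemma hits_bad_imp_mem_excursion_class:
  assumes P: "P \<in> meanders_to (2*n) 0" and bad: "hits_bad (real N) P"
  obtains x y s T where "N < x" "x \<le> n" "1 \<le> y" "y \<le> x" "real x powr (3/4) < real y"
    and "s < 2*x" "2*x < T" "T \<le> 2*n" "P \<in> excursion_class (2*n) y s (2*x) T"
proof -
  obtain x0 y0 :: int where x0: "real N < real_of_int x0" and y0: "real_of_int x0 powr (3/4) < real_of_int y0"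
    and "passes_through P (2*x0) (2*y0)"
    using bad unfolding hits_bad_def by blast
  then obtain k where k: "k \<le> 2*n" "int k = 2*x0" "height P k = 2*y0"
    using P unfolding passes_through_def meanders_to_def by auto
  have "0 < real_of_int x0"
    using x0 of_nat_0_le_iff[of N] by linarith
  moreover have "0 < real_of_int y0"
    using le_less_trans[OF powr_ge_zero y0] .
  ultimately have "0 < x0" "0 < y0"
    by simp_all
  define x where "x = nat x0"
  define y where "y = nat y0"
  have "int k = int (2*x)"
    using k(2) \<open>0 < x0\<close> unfolding x_def by simp
  then have "k = 2*x"
    by (simp only: of_nat_eq_iff)
  then have xy: "2*x \<le> 2*n" "height P (2*x) = 2 * int y" "1 \<le> y"
    using k \<open>0 < y0\<close> unfolding y_def by auto
  moreover have "N < x" "real x powr (3/4) < real y"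
    using x0 y0 \<open>0 < x0\<close> \<open>0 < y0\<close> unfolding x_def y_def by auto
  moreover have "y \<le> x"
    using height_le_index[of P "2*x"] xy by simp
  moreover obtain s T where "s < 2*x" "2*x < T" "T \<le> 2*n" "P \<in> excursion_class (2*n) y s (2*x) T"
    using mem_excursion_class_if_height[OF P \<open>1 \<le> y\<close> xy(1,2)] .
  ultimately show thesis
    using that by simp
qed

lemma sum_excursion_class_bad_le:
  assumes "1 \<le> x" and "y \<le> x" and "real x powr (3/4) < real y"
  shows "(\<Sum>P\<in>excursion_class L y s (2*x) T. mweight P) \<le> 25 * 40^10 / (real x)^3 * dnum L 0 / (real T + 2)^2"
proof -
  have "(real (2*x) + 2) / (real (2*x) + 2 + 2 * real y) = (real x + 1) / (real x + 1 + real y)"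
    by (simp add: field_simps)
  then have "(\<Sum>P\<in>excursion_class L y s (2*x) T. mweight P) * (real T + 2)^2
      \<le> ((real x + 1) / (real x + 1 + real y))^y * (2 * real x + real y + 2)^2 * dnum L 0"
    using sum_excursion_class_le[of L y s "2*x" T] by simp
  also have "\<dots> \<le> 40^10 / (real x)^5 * (25 * (real x)^2) * dnum L 0"
  proof (intro mult_right_mono mult_mono ratio_power_le assms dnum_nonneg)
    show "(2 * real x + real y + 2)^2 \<le> 25 * (real x)^2"
      using assms(1,2) power_mono[of "2 * real x + real y + 2" "5 * real x" 2] by (simp add: power_mult_distrib)
  qed simp_all
  also have "\<dots> = 25 * 40^10 / (real x)^3 * dnum L 0"
    using assms(1) by (simp add: field_simps power_numeral_reduce)
  finally show ?thesis
    by (simp only: pos_le_divide_eq zero_less_power2)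
qed

lemma sum_inverse_square_tail_le:
  fixes c :: real
  assumes "1 \<le> x" and "0 \<le> c"
  shows "(\<Sum>s<2*x. \<Sum>T\<in>{2*x<..m}. c / (real T + 2)^2) \<le> c"
proof -
  have "(\<Sum>T\<in>{2*x<..m}. 1 / (real T + 2)^2) \<le> (\<Sum>T\<in>{2*x<..m}. 1 / (real T)^2)"
    by (intro sum_mono divide_left_mono power_mono) auto
  also have "\<dots> \<le> 1 / (2 * real x)"
    using sum_inverse_square_le[of "2*x" m] assms(1) by simp
  finally have "c * (\<Sum>T\<in>{2*x<..m}. 1 / (real T + 2)^2) \<le> c * (1 / (2 * real x))"
    using assms(2) by (intro mult_left_mono) auto
  then have "(\<Sum>T\<in>{2*x<..m}. c / (real T + 2)^2) \<le> c / (2 * real x)"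
    by (subst (asm) sum_distrib_left) simp
  then have "(\<Sum>s<2*x. \<Sum>T\<in>{2*x<..m}. c / (real T + 2)^2) \<le> real (2*x) * (c / (2 * real x))"
    unfolding sum_constant card_lessThan by (intro mult_left_mono) auto
  also have "\<dots> = c"
    using assms(1) by simp
  finally show ?thesis .
qed

lemma sum_class_bounds_le:
  fixes K Z :: real and N n :: nat and Y :: "nat \<Rightarrow> nat set"
  assumes "1 \<le> N" and "0 \<le> K" and "0 \<le> Z" and "\<And>x. Y x \<subseteq> {1..x}"
  shows "(\<Sum>x\<in>{N<..n}. \<Sum>y\<in>Y x. \<Sum>s<2*x. \<Sum>T\<in>{2*x<..2*n}. K / (real x)^3 * Z / (real T + 2)^2)
    \<le> K / real N * Z"
proof -
  have "(\<Sum>y\<in>Y x. \<Sum>s<2*x. \<Sum>T\<in>{2*x<..2*n}. K / (real x)^3 * Z / (real T + 2)^2) \<le> K / (real x)^2 * Z"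
    if "N < x" for x
  proof -
    have "(\<Sum>y\<in>Y x. \<Sum>s<2*x. \<Sum>T\<in>{2*x<..2*n}. K / (real x)^3 * Z / (real T + 2)^2)
        \<le> real (card (Y x)) * (K / (real x)^3 * Z)"
      using that assms by (intro sum_bounded_above sum_inverse_square_tail_le) auto
    also have "\<dots> \<le> real x * (K / (real x)^3 * Z)"
      using card_mono[OF _ assms(4)[of x]] assms(2,3) by (intro mult_right_mono) auto
    also have "\<dots> = K / (real x)^2 * Z"
      using that by (simp add: power_numeral_reduce)
    finally show ?thesis .
  qed
  then have "(\<Sum>x\<in>{N<..n}. \<Sum>y\<in>Y x. \<Sum>s<2*x. \<Sum>T\<in>{2*x<..2*n}. K / (real x)^3 * Z / (real T + 2)^2)
      \<le> (\<Sum>x\<in>{N<..n}. K / (real x)^2 * Z)"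
    by (intro sum_mono) auto
  also have "\<dots> = K * Z * (\<Sum>x\<in>{N<..n}. 1 / (real x)^2)"
    by (simp add: sum_distrib_left)
  also have "\<dots> \<le> K * Z * (1 / real N)"
    using sum_inverse_square_le[OF assms(1)] assms(2,3) by (intro mult_left_mono) auto
  finally show ?thesis
    by simp
qed

lemma hits_bad_subset_excursion_classes:
  "{P\<in>meanders_to (2*n) 0. hits_bad (real N) P}
    \<subseteq> (\<Union>x\<in>{N<..n}. \<Union>y\<in>{y\<in>{1..x}. real x powr (3/4) < real y}.
         \<Union>s\<in>{..<2*x}. \<Union>T\<in>{2*x<..2*n}. excursion_class (2*n) y s (2*x) T)"
proof
  fix P assume "P \<in> {P\<in>meanders_to (2*n) 0. hits_bad (real N) P}"
  then obtain x y s T where "N < x" "x \<le> n" "1 \<le> y" "y \<le> x" "real x powr (3/4) < real y"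
    "s < 2*x" "2*x < T" "T \<le> 2*n" "P \<in> excursion_class (2*n) y s (2*x) T"
    by (blast elim: hits_bad_imp_mem_excursion_class)
  then have "x \<in> {N<..n}" "y \<in> {y\<in>{1..x}. real x powr (3/4) < real y}"
    "s \<in> {..<2*x}" "T \<in> {2*x<..2*n}" "P \<in> excursion_class (2*n) y s (2*x) T"
    by auto
  then show "P \<in> (\<Union>x\<in>{N<..n}. \<Union>y\<in>{y\<in>{1..x}. real x powr (3/4) < real y}.
      \<Union>s\<in>{..<2*x}. \<Union>T\<in>{2*x<..2*n}. excursion_class (2*n) y s (2*x) T)"
    by blast
qed

lemma sum_hits_bad_le:
  assumes "1 \<le> N"
  shows "(\<Sum>P\<in>{P\<in>meanders_to (2*n) 0. hits_bad (real N) P}. mweight P) \<le> 25 * 40^10 / real N * dnum (2*n) 0"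
proof -
  define Y where "Y x = {y\<in>{1..x}. real x powr (3/4) < real y}" for x :: nat
  define C where "C x y s T = excursion_class (2*n) y s (2*x) T" for x y s T
  have C_sub: "C x y s T \<subseteq> meanders_to (2*n) 0" for x y s T
    unfolding C_def excursion_class_def by auto
  have finite: "finite A" if "A \<subseteq> meanders_to (2*n) 0" for A
    using finite_subset[OF that finite_meanders_to] .
  have nonneg: "0 \<le> mweight P" if "P \<in> meanders_to (2*n) 0" for P
    using that by (auto intro: mweight_nonneg simp: meanders_to_def)
  have union_bound: "sum mweight (\<Union>i\<in>I. A i) \<le> (\<Sum>i\<in>I. sum mweight (A i))"
    if "finite I" and "\<And>i. i \<in> I \<Longrightarrow> A i \<subseteq> meanders_to (2*n) 0" for I :: "nat set" and A
    using that by (intro sum_UN_le finite nonneg) auto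
  have "(\<Sum>P\<in>{P\<in>meanders_to (2*n) 0. hits_bad (real N) P}. mweight P)
      \<le> sum mweight (\<Union>x\<in>{N<..n}. \<Union>y\<in>Y x. \<Union>s\<in>{..<2*x}. \<Union>T\<in>{2*x<..2*n}. C x y s T)"
    using hits_bad_subset_excursion_classes C_sub unfolding Y_def C_def
    by (intro sum_mono2 finite nonneg) blast+
  also have "\<dots> \<le> (\<Sum>x\<in>{N<..n}. \<Sum>y\<in>Y x. \<Sum>s<2*x. \<Sum>T\<in>{2*x<..2*n}. sum mweight (C x y s T))"
    using C_sub unfolding Y_def by (intro order.trans[OF union_bound] sum_mono; force)
  also have "\<dots> \<le> (\<Sum>x\<in>{N<..n}. \<Sum>y\<in>Y x. \<Sum>s<2*x. \<Sum>T\<in>{2*x<..2*n}.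
      25 * 40^10 / (real x)^3 * dnum (2*n) 0 / (real T + 2)^2)"
    using assms unfolding C_def Y_def by (intro sum_mono sum_excursion_class_bad_le) auto
  also have "\<dots> \<le> 25 * 40^10 / real N * dnum (2*n) 0"
    using assms by (intro sum_class_bounds_le dnum_nonneg) (auto simp: Y_def)
  finally show ?thesis .
qed

lemma dnum_eq_dtilde_add:
  "dnum n m = dtilde N n m + (\<Sum>P\<in>{P\<in>meanders_to n m. hits_bad N P}. mweight P)"
proof -
  have "meanders_to n m = {P\<in>meanders_to n m. \<not> hits_bad N P} \<union> {P\<in>meanders_to n m. hits_bad N P}"
    by auto
  then show ?thesis
    unfolding dnum_def dtilde_def using finite_meanders_to
    by (metis (no_types, lifting) sum.union_disjoint disjoint_iff finite_Un mem_Collect_eq)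
qed

lemma dnum_le_dtilde_add:
  "1 \<le> N \<Longrightarrow> dnum (2*n) 0 \<le> dtilde (real N) (2*n) 0 + 25 * 40^10 / real N * dnum (2*n) 0"
  using dnum_eq_dtilde_add[of "2*n" 0 "real N"] sum_hits_bad_le[of N n] by linarith

theorem lemma4p6:
  shows "\<forall>\<epsilon>::real. \<epsilon> > 0 \<longrightarrow> (\<exists>N::real. N > 0 \<and>
           (\<forall>n::nat. n > 0 \<longrightarrow> dnum (2*n) 0 \<le> (1 + \<epsilon>) * dtilde N (2*n) 0))"
proof (intro allI impI)
  fix \<epsilon> :: real
  assume "\<epsilon> > 0"
  obtain N :: nat where N: "25 * 40^10 * (1 + \<epsilon>) / \<epsilon> < real N"
    using reals_Archimedean2 by blast
  then have large: "25 * 40^10 * (1 + \<epsilon>) < \<epsilon> * real N"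
    using \<open>\<epsilon> > 0\<close> by (simp add: pos_divide_less_eq mult.commute)
  then have "1 \<le> N"
    using \<open>\<epsilon> > 0\<close> by (cases N) auto
  then have bound: "25 * 40^10 / real N \<le> \<epsilon> / (1 + \<epsilon>)"
    using large \<open>\<epsilon> > 0\<close> by (simp add: divide_simps mult.commute)
  have "dnum (2*n) 0 \<le> (1 + \<epsilon>) * dtilde (real N) (2*n) 0" for n
  proof -
    have "dnum (2*n) 0 \<le> dtilde (real N) (2*n) 0 + \<epsilon> / (1 + \<epsilon>) * dnum (2*n) 0"
      using dnum_le_dtilde_add[OF \<open>1 \<le> N\<close>, of n] mult_right_mono[OF bound dnum_nonneg[of "2*n" 0]]
      by linarith
    then show ?thesis
      using \<open>\<epsilon> > 0\<close> by (simp add: field_simps)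
  qed
  then show "\<exists>N::real. N > 0 \<and> (\<forall>n::nat. n > 0 \<longrightarrow> dnum (2*n) 0 \<le> (1 + \<epsilon>) * dtilde N (2*n) 0)"
    using \<open>1 \<le> N\<close> by (intro exI[of _ "real N"]) auto
qed

end
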